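(* Let $\Gamma$ be a weighted digraph with vertex set $\{1,\dots,n\}$, $n>1$, without loops and with strictly positive arc weights, with Laplacian matrix $L$ and in-forest dimension $d$. Then $$Q=\sum_{k=0}^{n-d}s_{n-d-k}(-L)^k=\operatorname{adj}(I+L),$$ and for every $\tau\in\mathbb R$, $$Q(\tau)=\sum_{k=0}^{n-d}s_{n-d-k}(\tau)(-\tau L)^k=\operatorname{adj}(I+\tau L).$$
   Context: $W=(w_{ij})$ is the matrix of arc weights ($w_{ij}>0$ iff there is an arc $i\to j$, else $0$). The Laplacian $L=(\ell_{ij})$: $\ell_{ij}=-w_{ij}$ for $j\ne i$, $\ell_{ii}=\sum_{k\ne i}w_{ik}$. The weight of a subgraph is the product of its arc weights (1 if no arcs); the weight of a set of subgraphs is the sum of their weights. A converging tree is a weakly connected digraph with one vertex (the root) of outdegree 0 and all others of outdegree 1; an in-forest is a spanning subgraph of $\Gamma$ whose weak components are converging trees. The in-forest dimension $d$ is the minimal number of trees in an in-forest (so in-forests have at most $n-d$ arcs). $\sigma_k$ is the total weight of in-forests with $k$ arcs; $Q_k=(q^k_{ij})$ with $q^k_{ij}$ the total weight of in-forests with $k$ arcs in which $i$ lies in a tree rooted at $j$. $Q=\sum_{k=0}^{n-d}Q_k$, $Q(\tau)=\sum_{k=0}^{n-d}Q_k\tau^k$, $s_k=\sum_{j=0}^k\sigma_j$, $s_k(\tau)=\sum_{j=0}^k\sigma_j\tau^j$. $\operatorname{adj}A$ is the transposed matrix of cofactors. *)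

theory Defs
  imports "Jordan_Normal_Form.Determinant"
begin

(* Vertices are 0..<n (the paper's 1..n shifted by one).
   W is the n x n weight matrix: W $$ (i,j) > 0 iff there is an arc i -> j. *)

definition arcs :: "nat \<Rightarrow> real mat \<Rightarrow> (nat \<times> nat) set" where
  "arcs n W = {(i,j). i < n \<and> j < n \<and> W $$ (i,j) \<noteq> 0}"

definition laplacian :: "nat \<Rightarrow> real mat \<Rightarrow> real mat" where
  "laplacian n W = mat n n (\<lambda>(i,j). if i = j then (\<Sum>k\<in>{0..<n} - {i}. W $$ (i,k)) else - W $$ (i,j))"

definition outdeg :: "(nat \<times> nat) set \<Rightarrow> nat \<Rightarrow> nat" where
  "outdeg F i = card {j. (i,j) \<in> F}"

definition weak_conn :: "(nat \<times> nat) set \<Rightarrow> nat \<Rightarrow> nat \<Rightarrow> bool" where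
  "weak_conn F i j \<longleftrightarrow> (i,j) \<in> (F \<union> F\<inverse>)\<^sup>*"

(* spanning subgraph of Gamma whose weak components are converging trees:
   every vertex has outdegree 0 or 1, and every weak component contains
   exactly one vertex of outdegree 0 (its root) *)
definition is_in_forest :: "nat \<Rightarrow> real mat \<Rightarrow> (nat \<times> nat) set \<Rightarrow> bool" where
  "is_in_forest n W F \<longleftrightarrow> F \<subseteq> arcs n W \<and> (\<forall>i<n. outdeg F i \<le> 1) \<and>
     (\<forall>i<n. \<exists>!r. r < n \<and> weak_conn F i r \<and> outdeg F r = 0)"

definition in_forests :: "nat \<Rightarrow> real mat \<Rightarrow> (nat \<times> nat) set set" where
  "in_forests n W = {F. is_in_forest n W F}"

definition sg_weight :: "real mat \<Rightarrow> (nat \<times> nat) set \<Rightarrow> real" where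
  "sg_weight W F = (\<Prod>(i,j)\<in>F. W $$ (i,j))"

definition num_trees :: "nat \<Rightarrow> (nat \<times> nat) set \<Rightarrow> nat" where
  "num_trees n F = card {r. r < n \<and> outdeg F r = 0}"

definition forest_dim :: "nat \<Rightarrow> real mat \<Rightarrow> nat" where
  "forest_dim n W = Min (num_trees n ` in_forests n W)"

definition sigma :: "nat \<Rightarrow> real mat \<Rightarrow> nat \<Rightarrow> real" where
  "sigma n W k = (\<Sum>F\<in>{F \<in> in_forests n W. card F = k}. sg_weight W F)"

definition Qk :: "nat \<Rightarrow> real mat \<Rightarrow> nat \<Rightarrow> real mat" where
  "Qk n W k = mat n n (\<lambda>(i,j).
     \<Sum>F\<in>{F \<in> in_forests n W. card F = k \<and> weak_conn F i j \<and> outdeg F j = 0}. sg_weight W F)"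

definition mat_sum :: "nat \<Rightarrow> ('k \<Rightarrow> real mat) \<Rightarrow> 'k set \<Rightarrow> real mat" where
  "mat_sum n f K = mat n n (\<lambda>(i,j). \<Sum>k\<in>K. f k $$ (i,j))"

definition Qtot :: "nat \<Rightarrow> real mat \<Rightarrow> real mat" where
  "Qtot n W = mat_sum n (Qk n W) {0..n - forest_dim n W}"

definition Qtau :: "nat \<Rightarrow> real mat \<Rightarrow> real \<Rightarrow> real mat" where
  "Qtau n W \<tau> = mat_sum n (\<lambda>k. \<tau> ^ k \<cdot>\<^sub>m Qk n W k) {0..n - forest_dim n W}"

definition s_sum :: "nat \<Rightarrow> real mat \<Rightarrow> nat \<Rightarrow> real" where
  "s_sum n W k = (\<Sum>j=0..k. sigma n W j)"

definition s_tau :: "nat \<Rightarrow> real mat \<Rightarrow> nat \<Rightarrow> real \<Rightarrow> real" where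
  "s_tau n W k \<tau> = (\<Sum>j=0..k. sigma n W j * \<tau> ^ j)"

end

theory Submission
  imports Defs
begin

(* Row i of I + tL is e_i + (sum over arcs i -> m of t w_im (e_i - e_m)). Expanding det (I + tL)
   multilinearly in the rows gives a sum over partial successor maps f of t^|f| times the weight
   of the chosen arcs times the determinant of the matrix with rows e_i - e_f(i) (e_i where f is
   undefined). That determinant is 1 if f has no cycle and 0 otherwise, and the acyclic successor
   maps are exactly the in-forests, so det (I + tL) = sum_k sigma_k t^k. Replacing row j by
   e_i = e_j - (e_j - e_i), the same expansion computes the (i,j) entry of the adjugate; the
   difference of the two determinants is nonzero exactly when the arc j -> i would close a cycle,
   i.e. when i lies in the tree rooted at j, so adj (I + tL) = sum_k Q_k t^k. Comparing
   coefficients in adj A * A = det A * I gives Q_k + Q_(k-1) L = sigma_k I, hence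
   Q_k = sum_j sigma_(k-j) (-L)^j; regrouping sum_k tau^k Q_k gives the formula for Q(tau), and
   tau = 1 gives Q.

   None of the hypotheses on n and W is needed: in-forests are acyclic, so loops never
   contribute, and all identities are polynomial in the weights. *)

lemma sum_delta_mult:
  "finite A \<Longrightarrow> (\<Sum>k\<in>A. (if k = i then 1 else 0) * g k) = (if i \<in> A then g i else (0::'a::semiring_1))"
  by (simp add: if_distrib[of "\<lambda>x. x * _"] sum.delta' cong: if_cong)

lemma sum_PiE_fun_upd_pair:
  assumes j: "j \<in> I" and ab: "a \<noteq> b"
  shows "(\<Sum>f\<in>PiE I (C(j := {a, b})). g f) = (\<Sum>f\<in>PiE I (C(j := {a})). g f + g (f(j := b)))"
proof -
  let ?S = "PiE I (C(j := {a}))"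
  have split: "PiE I (C(j := {a, b})) = ?S \<union> (\<lambda>f. f(j := b)) ` ?S"
  proof (intro equalityI subsetI)
    fix f assume f: "f \<in> PiE I (C(j := {a, b}))"
    show "f \<in> ?S \<union> (\<lambda>f. f(j := b)) ` ?S"
    proof (cases "f j = a")
      case False
      with f j have fj: "f j = b" and "f(j := a) \<in> ?S"
        by (auto simp: PiE_def Pi_def extensional_def)
      moreover have "f = (f(j := a))(j := b)"
        using fj by (simp add: fun_upd_idem)
      ultimately show ?thesis
        by blast
    qed (use f in \<open>auto simp: PiE_def Pi_def\<close>)
  qed (use j in \<open>auto simp: PiE_def Pi_def extensional_def\<close>)
  have inj: "inj_on (\<lambda>f. f(j := b)) ?S"
  proof (rule inj_onI)
    fix f g assume "f \<in> ?S" "g \<in> ?S" "f(j := b) = g(j := b)"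
    with j show "f = g"
      by (metis PiE_mem fun_upd_same fun_upd_triv fun_upd_upd singletonD)
  qed
  have "?S \<inter> (\<lambda>f. f(j := b)) ` ?S = {}"
    using j ab by (auto simp: PiE_def Pi_def)
  show ?thesis
  proof (cases "finite ?S")
    case True
    show ?thesis
      unfolding split sum.union_disjoint[OF True finite_imageI[OF True] \<open>_ = {}\<close>]
        sum.reindex[OF inj] by (simp add: sum.distrib)
  next
    case False
    moreover have "infinite (PiE I (C(j := {a, b})))"
      using False split finite_Un by auto
    ultimately show ?thesis by simp
  qed
qed

lemma sum_convolution_reindex:
  fixes s p :: "nat \<Rightarrow> 'a::comm_semiring_1"
  shows "(\<Sum>k\<le>N. t ^ k * (\<Sum>j\<le>k. s (k - j) * p j)) = (\<Sum>j\<le>N. (\<Sum>m\<le>N - j. s m * t ^ m) * (t ^ j * p j))"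
proof -
  define g where "g j m = s m * t ^ m * (t ^ j * p j)" for j m
  have "(\<Sum>k\<le>N. t ^ k * (\<Sum>j\<le>k. s (k - j) * p j)) = (\<Sum>k\<le>N. \<Sum>j\<le>k. g j (k - j))"
  proof (intro sum.cong refl)
    fix k
    have "t ^ k * (s (k - j) * p j) = g j (k - j)" if "j \<le> k" for j
      using that by (simp add: g_def mult_ac flip: power_add)
    then show "t ^ k * (\<Sum>j\<le>k. s (k - j) * p j) = (\<Sum>j\<le>k. g j (k - j))"
      by (simp add: sum_distrib_left)
  qed
  also have "\<dots> = (\<Sum>(j,m)\<in>{(j,m). j + m \<le> N}. g j m)"
    by (rule sum.triangle_reindex_eq[symmetric])
  also have "{(j,m). j + m \<le> N} = (SIGMA j:{..N}. {..N - j})"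
    by auto
  also have "(\<Sum>(j,m)\<in>(SIGMA j:{..N}. {..N - j}). g j m) = (\<Sum>j\<le>N. \<Sum>m\<le>N - j. g j m)"
    by (rule sum.Sigma[symmetric]) auto
  finally show ?thesis
    by (simp add: g_def sum_distrib_right)
qed

lemma index_mult_mat_square:
  assumes "A \<in> carrier_mat n n" "B \<in> carrier_mat n n" "i < n" "j < n"
  shows "(A * B) $$ (i,j) = (\<Sum>m<n. A $$ (i,m) * B $$ (m,j))"
  using assms by (simp add: scalar_prod_def atLeast0LessThan)

lemma pow_mat_smult:
  fixes A :: "'a::comm_ring_1 mat"
  assumes A: "A \<in> carrier_mat n n"
  shows "(c \<cdot>\<^sub>m A) ^\<^sub>m k = c ^ k \<cdot>\<^sub>m A ^\<^sub>m k"
proof (induction k)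
  case (Suc k)
  have "(c \<cdot>\<^sub>m A) ^\<^sub>m Suc k = (c ^ k \<cdot>\<^sub>m A ^\<^sub>m k) * (c \<cdot>\<^sub>m A)"
    by (simp add: Suc.IH)
  also have "\<dots> = c ^ k \<cdot>\<^sub>m (A ^\<^sub>m k * (c \<cdot>\<^sub>m A))"
    using A by (intro mult_smult_assoc_mat) auto
  also have "\<dots> = c ^ Suc k \<cdot>\<^sub>m A ^\<^sub>m Suc k"
    using A by (intro eq_matI) (simp_all add: mult_smult_distrib[of _ n n] mult_ac)
  finally show ?case .
qed (use A in \<open>auto intro!: eq_matI\<close>)

lemma det_expand_rows:
  fixes A :: "'a::comm_ring_1 mat"
  assumes A: "A \<in> carrier_mat n n" and fin: "\<And>i. i < n \<Longrightarrow> finite (C i)"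
    and row: "\<And>i k. i < n \<Longrightarrow> k < n \<Longrightarrow> A $$ (i,k) = (\<Sum>c\<in>C i. a i c * v i c k)"
  shows "det A = (\<Sum>f\<in>PiE {0..<n} C. (\<Prod>i=0..<n. a i (f i)) * det (mat n n (\<lambda>(i,k). v i (f i) k)))"
proof -
  let ?P = "{p. p permutes {0..<n}}"
  let ?V = "\<lambda>f. mat n n (\<lambda>(i,k). v i (f i) k)"
  have perm_lt: "p i < n" if "p \<in> ?P" "i < n" for p i
    using that permutes_in_image by fastforce
  have "det A = (\<Sum>p\<in>?P. signof p * (\<Prod>i=0..<n. A $$ (i, p i)))"
    by (rule det_def'[OF A])
  also have "\<dots> = (\<Sum>p\<in>?P. \<Sum>f\<in>PiE {0..<n} C. signof p * (\<Prod>i=0..<n. a i (f i) * v i (f i) (p i)))"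
  proof (rule sum.cong[OF refl])
    fix p assume p: "p \<in> ?P"
    have "(\<Prod>i=0..<n. A $$ (i, p i)) = (\<Prod>i=0..<n. \<Sum>c\<in>C i. a i c * v i c (p i))"
      by (rule prod.cong) (simp_all add: row perm_lt[OF p])
    also have "\<dots> = (\<Sum>f\<in>PiE {0..<n} C. \<Prod>i=0..<n. a i (f i) * v i (f i) (p i))"
      by (rule prod_sum_PiE) (simp_all add: fin)
    finally show "signof p * (\<Prod>i=0..<n. A $$ (i, p i)) =
        (\<Sum>f\<in>PiE {0..<n} C. signof p * (\<Prod>i=0..<n. a i (f i) * v i (f i) (p i)))"
      by (simp add: sum_distrib_left)
  qed
  also have "\<dots> = (\<Sum>f\<in>PiE {0..<n} C. (\<Prod>i=0..<n. a i (f i)) *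
                    (\<Sum>p\<in>?P. signof p * (\<Prod>i=0..<n. v i (f i) (p i))))"
    by (subst sum.swap) (simp add: sum_distrib_left prod.distrib ac_simps)
  also have "\<dots> = (\<Sum>f\<in>PiE {0..<n} C. (\<Prod>i=0..<n. a i (f i)) * det (?V f))"
  proof (rule sum.cong[OF refl])
    fix f
    have "det (?V f) = (\<Sum>p\<in>?P. signof p * (\<Prod>i=0..<n. ?V f $$ (i, p i)))"
      by (rule det_def') simp
    also have "\<dots> = (\<Sum>p\<in>?P. signof p * (\<Prod>i=0..<n. v i (f i) (p i)))"
      by (intro sum.cong refl arg_cong[where f="\<lambda>x. signof _ * x"] prod.cong) (simp add: perm_lt)
    finally show "(\<Prod>i=0..<n. a i (f i)) * (\<Sum>p\<in>?P. signof p * (\<Prod>i=0..<n. v i (f i) (p i))) =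
        (\<Prod>i=0..<n. a i (f i)) * det (?V f)" by simp
  qed
  finally show ?thesis .
qed

lemma adj_mat_entry_eq_det_replace_row:
  fixes A :: "'a::comm_ring_1 mat"
  assumes A: "A \<in> carrier_mat n n" and i: "i < n" and j: "j < n"
  shows "adj_mat A $$ (i,j) =
    det (mat n n (\<lambda>(k,l). if k = j then (if l = i then 1 else 0) else A $$ (k,l)))"
    (is "_ = det ?B")
proof -
  have B: "?B \<in> carrier_mat n n" by simp
  have "mat_delete A j i = mat_delete ?B j i"
    using A by (intro eq_matI) (auto simp: mat_delete_def)
  then have "adj_mat A $$ (i,j) = cofactor ?B j i"
    using A i j by (simp add: adj_mat_def cofactor_def)
  also have "\<dots> = (\<Sum>l<n. ?B $$ (j,l) * cofactor ?B j l)"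
    using i j by (simp add: if_distrib[of "\<lambda>x. x * _"] sum.delta' cong: if_cong)
  also have "\<dots> = det ?B"
    by (rule laplace_expansion_row[OF B j, symmetric])
  finally show ?thesis .
qed

section \<open>Functional digraphs\<close>

lemma single_valued_reaches_cycle_iff:
  assumes sv: "single_valued R" and cyc: "(i,i) \<in> R\<^sup>+" and km: "(k,m) \<in> R"
  shows "(k,i) \<in> R\<^sup>* \<longleftrightarrow> (m,i) \<in> R\<^sup>*"
proof
  assume "(k,i) \<in> R\<^sup>*"
  with cyc have "(k,i) \<in> R\<^sup>+"
    by (cases "k = i") (auto simp: rtrancl_eq_or_trancl)
  then obtain w where "(k,w) \<in> R" "(w,i) \<in> R\<^sup>*"
    by (blast dest: tranclD)
  with sv km show "(m,i) \<in> R\<^sup>*"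
    unfolding single_valued_def by blast
next
  assume "(m,i) \<in> R\<^sup>*"
  with km show "(k,i) \<in> R\<^sup>*"
    by (meson converse_rtrancl_into_rtrancl)
qed

lemma single_valued_cycle_absorbs:
  assumes sv: "single_valued R" and cyc: "(x,x) \<in> R\<^sup>+" and path: "(x,y) \<in> R\<^sup>*"
  shows "y \<in> Domain R"
proof -
  from path have "(y,x) \<in> R\<^sup>*"
    by induction (use single_valued_reaches_cycle_iff[OF sv cyc] in blast)+
  with cyc have "(y,x) \<in> R\<^sup>+"
    by (cases "y = x") (auto simp: rtrancl_eq_or_trancl)
  then show ?thesis
    by (blast dest: tranclD)
qed

lemma weak_conn_sym:
  assumes "weak_conn F i j"
  shows "weak_conn F j i"
proof -
  have "(j,i) \<in> ((F \<union> F\<inverse>)\<inverse>)\<^sup>*"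
    using assms unfolding weak_conn_def by (simp add: rtrancl_converse)
  moreover have "(F \<union> F\<inverse>)\<inverse> = F \<union> F\<inverse>"
    by auto
  ultimately show ?thesis
    unfolding weak_conn_def by simp
qed

lemma weak_path_to_sink:
  assumes sv: "single_valued F" and sink: "r \<notin> Domain F" and path: "(r,y) \<in> (F \<union> F\<inverse>)\<^sup>*"
  shows "(y,r) \<in> F\<^sup>*"
  using path
proof (induction rule: rtrancl_induct)
  case (step y z)
  from step.hyps(2) show ?case
  proof
    assume yz: "(y,z) \<in> F"
    with sink have "y \<noteq> r" by auto
    with step.IH obtain w where "(y,w) \<in> F" "(w,r) \<in> F\<^sup>*"
      by (meson converse_rtranclE)
    with sv yz show ?thesis
      unfolding single_valued_def by blast
  next
    assume "(y,z) \<in> F\<inverse>"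
    with step.IH show ?thesis
      by (meson converse_iff converse_rtrancl_into_rtrancl)
  qed
qed simp

lemma weak_conn_sink_iff:
  assumes sv: "single_valued F" and sink: "j \<notin> Domain F"
  shows "weak_conn F i j \<longleftrightarrow> (i,j) \<in> F\<^sup>*"
proof
  assume "weak_conn F i j"
  then show "(i,j) \<in> F\<^sup>*"
    using weak_path_to_sink[OF sv sink] weak_conn_sym unfolding weak_conn_def by blast
next
  assume "(i,j) \<in> F\<^sup>*"
  then show "weak_conn F i j"
    unfolding weak_conn_def using rtrancl_mono[of F "F \<union> F\<inverse>"] by blast
qed

lemma exists_sink:
  assumes "finite F" "acyclic F"
  shows "\<exists>r. (i,r) \<in> F\<^sup>* \<and> r \<notin> Domain F"
proof -
  have "wf (F\<inverse>)"
    by (rule finite_acyclic_wf_converse[OF assms])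
  then obtain r where r: "(i,r) \<in> F\<^sup>*" and min: "\<And>y. (y,r) \<in> F\<inverse> \<Longrightarrow> (i,y) \<notin> F\<^sup>*"
    using wfE_min[of "F\<inverse>" i "{y. (i,y) \<in> F\<^sup>*}"] by auto
  have "r \<notin> Domain F"
    using r min by (auto intro: rtrancl_into_rtrancl)
  with r show ?thesis by blast
qed

definition succ_row :: "nat \<Rightarrow> nat option \<Rightarrow> nat \<Rightarrow> 'a::ring_1" where
  "succ_row i c k = (if k = i then 1 else 0) - (case c of None \<Rightarrow> 0 | Some m \<Rightarrow> if k = m then 1 else 0)"

definition succ_mat :: "nat \<Rightarrow> (nat \<Rightarrow> nat option) \<Rightarrow> 'a::ring_1 mat" where
  "succ_mat n f = mat n n (\<lambda>(i,k). succ_row i (f i) k)"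

definition succ_rel :: "nat \<Rightarrow> (nat \<Rightarrow> nat option) \<Rightarrow> (nat \<times> nat) set" where
  "succ_rel n f = {(k,m). k < n \<and> f k = Some m}"

lemma single_valued_succ_rel: "single_valued (succ_rel n f)"
  unfolding single_valued_def succ_rel_def by auto

lemma finite_succ_rel: "finite (succ_rel n f)"
proof (rule finite_subset)
  show "succ_rel n f \<subseteq> (\<lambda>k. (k, the (f k))) ` {..<n}"
    unfolding succ_rel_def by force
qed simp

lemma Domain_succ_rel: "Domain (succ_rel n f) = {k. k < n \<and> f k \<noteq> None}"
  by (auto simp: succ_rel_def)

lemma succ_rel_fun_upd:
  "j < n \<Longrightarrow> f j = None \<Longrightarrow> succ_rel n (f(j := Some i)) = insert (j,i) (succ_rel n f)"
  by (auto simp: succ_rel_def split: if_splits)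

lemma outdeg_succ_rel: "i < n \<Longrightarrow> outdeg (succ_rel n f) i = card (set_option (f i))"
  unfolding outdeg_def succ_rel_def by (cases "f i") auto

lemma succ_mat_col_source:
  assumes x: "x < n" and source: "x \<notin> Range (succ_rel n f)" and k: "k < n"
  shows "succ_mat n f $$ (k,x) = (if k = x then 1 else 0)"
  using source x k by (cases "f k") (auto simp: succ_mat_def succ_row_def succ_rel_def)

lemma det_succ_mat_source:
  assumes x: "x < n" and source: "x \<notin> Range (succ_rel n f)"
  shows "det (succ_mat n f :: 'a::comm_ring_1 mat) = cofactor (succ_mat n f) x x"
proof -
  have "det (succ_mat n f :: 'a mat) = (\<Sum>k<n. succ_mat n f $$ (k,x) * cofactor (succ_mat n f) k x)"
    by (rule laplace_expansion_column) (simp_all add: succ_mat_def x)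
  also have "\<dots> = (\<Sum>k<n. (if k = x then 1 else 0) * cofactor (succ_mat n f) k x)"
    by (rule sum.cong) (simp_all add: succ_mat_col_source[OF x source])
  finally show ?thesis
    using x by (simp add: sum_delta_mult)
qed

lemma det_succ_mat_remove_source:
  assumes x: "x < n" and source: "x \<notin> Range (succ_rel n f)"
  shows "det (succ_mat n f :: 'a::comm_ring_1 mat) = det (succ_mat n (f(x := None)) :: 'a mat)"
proof -
  have source': "x \<notin> Range (succ_rel n (f(x := None)))"
    using source by (auto simp: succ_rel_def)
  have "mat_delete (succ_mat n f :: 'a mat) x x = mat_delete (succ_mat n (f(x := None))) x x"
    by (intro eq_matI) (auto simp: mat_delete_def succ_mat_def)
  then show ?thesis
    unfolding det_succ_mat_source[OF x source] det_succ_mat_source[OF x source'] cofactor_def by simp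
qed

lemma det_succ_mat_acyclic:
  assumes "acyclic (succ_rel n f)"
  shows "det (succ_mat n f :: 'a::comm_ring_1 mat) = 1"
  using assms
proof (induction "card (Domain (succ_rel n f))" arbitrary: f rule: less_induct)
  case less
  let ?R = "succ_rel n f"
  show ?case
  proof (cases "?R = {}")
    case True
    then have "succ_mat n f = (1\<^sub>m n :: 'a mat)"
      by (intro eq_matI) (auto simp: succ_mat_def succ_row_def succ_rel_def split: option.split)
    then show ?thesis by simp
  next
    case False
    then obtain x0 where "x0 \<in> Domain ?R"
      by auto
    then obtain x where x_dom: "x \<in> Domain ?R" and min: "\<And>y. (y,x) \<in> ?R \<Longrightarrow> y \<notin> Domain ?R"
      by (rule wfE_min[OF finite_acyclic_wf[OF finite_succ_rel less.prems]]) blast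
    then have source: "x \<notin> Range ?R"
      by blast
    from x_dom have x: "x < n"
      unfolding succ_rel_def by auto
    have sub: "succ_rel n (f(x := None)) \<subseteq> ?R"
      unfolding succ_rel_def by (auto split: if_splits)
    have "Domain (succ_rel n (f(x := None))) = Domain ?R - {x}"
      unfolding succ_rel_def by auto
    then have "card (Domain (succ_rel n (f(x := None)))) < card (Domain ?R)"
      using card_Diff1_less[OF finite_Domain[OF finite_succ_rel] x_dom] by simp
    then have "det (succ_mat n (f(x := None)) :: 'a mat) = 1"
      using less.hyps acyclic_subset[OF less.prems sub] by blast
    with det_succ_mat_remove_source[OF x source, where 'a = 'a] show ?thesis
      by simp
  qed
qed

lemma succ_mat_mult_reaching_indicator:
  assumes range: "Range (succ_rel n f) \<subseteq> {..<n}" and cyc: "(i,i) \<in> (succ_rel n f)\<^sup>+"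
  shows "succ_mat n f *\<^sub>v vec n (\<lambda>k. if (k,i) \<in> (succ_rel n f)\<^sup>* then 1 else 0) = (0\<^sub>v n :: 'a::ring_1 vec)"
    (is "_ *\<^sub>v ?u = _")
proof (rule eq_vecI)
  let ?R = "succ_rel n f"
  fix k assume "k < dim_vec (0\<^sub>v n :: 'a vec)"
  then have k: "k < n" by simp
  from cyc have "i \<in> Domain ?R"
    by (blast dest: tranclD)
  then have fi: "f i \<noteq> None"
    unfolding succ_rel_def by auto
  have row: "(succ_mat n f *\<^sub>v ?u) $ k = (\<Sum>l=0..<n. succ_row k (f k) l * ?u $ l)"
    using k by (simp add: succ_mat_def mult_mat_vec_def scalar_prod_def)
  show "(succ_mat n f *\<^sub>v ?u) $ k = 0\<^sub>v n $ k"
  proof (cases "f k")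
    case None
    have "(k,i) \<notin> ?R\<^sup>*"
    proof
      assume "(k,i) \<in> ?R\<^sup>*"
      moreover have "k \<noteq> i" using None fi by auto
      ultimately obtain z where "(k,z) \<in> ?R" by (meson converse_rtranclE)
      with None show False unfolding succ_rel_def by auto
    qed
    with None k show ?thesis
      unfolding row by (simp add: succ_row_def sum_delta_mult)
  next
    case (Some m)
    have km: "(k,m) \<in> ?R" and m: "m < n"
      using Some k range unfolding succ_rel_def by auto
    have "?u $ k = ?u $ m"
      using single_valued_reaches_cycle_iff[OF single_valued_succ_rel cyc km] k m by simp
    with Some k m show ?thesis
      unfolding row by (simp add: succ_row_def left_diff_distrib sum_subtractf sum_delta_mult)
  qed
qed (simp add: succ_mat_def)

lemma det_succ_mat_cyclic:
  assumes range: "Range (succ_rel n f) \<subseteq> {..<n}" and cyclic: "\<not> acyclic (succ_rel n f)"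
  shows "det (succ_mat n f :: 'a::idom mat) = 0"
proof -
  obtain i where cyc: "(i,i) \<in> (succ_rel n f)\<^sup>+"
    using cyclic unfolding acyclic_def by blast
  then have "i \<in> Domain (succ_rel n f)"
    by (blast dest: tranclD)
  then have "i < n"
    unfolding succ_rel_def by auto
  let ?u = "vec n (\<lambda>k. if (k,i) \<in> (succ_rel n f)\<^sup>* then 1 else 0) :: 'a vec"
  from \<open>i < n\<close> have "?u \<noteq> 0\<^sub>v n"
    by (auto dest!: arg_cong[where f="\<lambda>x. x $ i"])
  moreover have "?u \<in> carrier_vec n" "succ_mat n f \<in> carrier_mat n n"
    by (simp_all add: succ_mat_def)
  moreover have "succ_mat n f *\<^sub>v ?u = 0\<^sub>v n"
    by (rule succ_mat_mult_reaching_indicator[OF range cyc])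
  ultimately show ?thesis
    using det_0_iff_vec_prod_zero by blast
qed

lemma det_succ_mat:
  assumes "Range (succ_rel n f) \<subseteq> {..<n}"
  shows "det (succ_mat n f :: 'a::idom mat) = (if acyclic (succ_rel n f) then 1 else 0)"
  using det_succ_mat_acyclic det_succ_mat_cyclic[OF assms] by auto

section \<open>In-forests\<close>

lemma finite_arcs: "finite (arcs n W)"
proof (rule finite_subset)
  show "arcs n W \<subseteq> {..<n} \<times> {..<n}"
    unfolding arcs_def by auto
qed simp

lemma outdeg_eq_0_iff:
  assumes "finite F"
  shows "outdeg F r = 0 \<longleftrightarrow> r \<notin> Domain F"
proof -
  have "finite {j. (r,j) \<in> F}"
    using assms finite_subset[of "{j. (r,j) \<in> F}" "snd ` F"] by force
  then show ?thesis
    unfolding outdeg_def by auto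
qed

lemma single_valued_if_outdeg_le_1:
  assumes sub: "F \<subseteq> arcs n W" and outdeg: "\<forall>i<n. outdeg F i \<le> 1"
  shows "single_valued F"
proof (rule single_valuedI)
  fix x y z assume xy: "(x,y) \<in> F" and xz: "(x,z) \<in> F"
  then have "x < n"
    using sub by (auto simp: arcs_def)
  with outdeg have "card {j. (x,j) \<in> F} \<le> Suc 0"
    unfolding outdeg_def by auto
  moreover have "finite {j. (x,j) \<in> F}"
    using finite_subset[OF sub finite_arcs] finite_subset[of "{j. (x,j) \<in> F}" "snd ` F"] by force
  ultimately show "y = z"
    using card_le_Suc0_iff_eq xy xz by blast
qed

lemma acyclic_if_is_in_forest:
  assumes forest: "is_in_forest n W F"
  shows "acyclic F"
  unfolding acyclic_def
proof (intro allI notI)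
  fix x assume cyc: "(x,x) \<in> F\<^sup>+"
  have sub: "F \<subseteq> arcs n W" and outdeg: "\<forall>i<n. outdeg F i \<le> 1"
    using forest unfolding is_in_forest_def by auto
  have fin: "finite F"
    using finite_subset[OF sub finite_arcs] .
  have sv: "single_valued F"
    by (rule single_valued_if_outdeg_le_1[OF sub outdeg])
  from cyc have "x \<in> Domain F"
    by (blast dest: tranclD)
  with sub have "x < n"
    by (auto simp: arcs_def)
  then obtain r where conn: "weak_conn F x r" and "outdeg F r = 0"
    using forest unfolding is_in_forest_def by blast
  with fin have sink: "r \<notin> Domain F"
    by (simp add: outdeg_eq_0_iff)
  have "(x,r) \<in> F\<^sup>*"
    using weak_conn_sink_iff[OF sv sink] conn by simp
  with sink show False
    using single_valued_cycle_absorbs[OF sv cyc] by blast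
qed

lemma is_in_forest_if_acyclic:
  assumes sub: "F \<subseteq> arcs n W" and outdeg: "\<forall>i<n. outdeg F i \<le> 1" and acyc: "acyclic F"
  shows "is_in_forest n W F"
  unfolding is_in_forest_def
proof (intro conjI sub outdeg allI impI)
  fix i assume i: "i < n"
  have fin: "finite F"
    using finite_subset[OF sub finite_arcs] .
  have sv: "single_valued F"
    by (rule single_valued_if_outdeg_le_1[OF sub outdeg])
  obtain r where ir: "(i,r) \<in> F\<^sup>*" and sink: "r \<notin> Domain F"
    using exists_sink[OF fin acyc] by blast
  have rn: "r < n"
  proof (cases "i = r")
    case False
    with ir obtain w where "(w,r) \<in> F"
      by (blast elim: rtranclE)
    with sub show ?thesis
      by (auto simp: arcs_def)
  qed (use i in simp)
  have conn: "weak_conn F i r"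
    using weak_conn_sink_iff[OF sv sink] ir by simp
  have uniq: "r' = r" if "weak_conn F i r'" and "outdeg F r' = 0" for r'
  proof -
    have "(r,r') \<in> (F \<union> F\<inverse>)\<^sup>*"
      using weak_conn_sym[OF conn] that(1) unfolding weak_conn_def
      by (rule rtrancl_trans)
    then have "(r',r) \<in> F\<^sup>*"
      by (rule weak_path_to_sink[OF sv sink])
    moreover have "r' \<notin> Domain F"
      using that(2) fin by (simp add: outdeg_eq_0_iff)
    ultimately show "r' = r"
      by (blast elim: converse_rtranclE)
  qed
  have "outdeg F r = 0"
    using sink fin by (simp add: outdeg_eq_0_iff)
  with rn conn show "\<exists>!r. r < n \<and> weak_conn F i r \<and> outdeg F r = 0"
    using uniq by blast
qed

lemma is_in_forest_iff_acyclic: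
  "is_in_forest n W F \<longleftrightarrow> F \<subseteq> arcs n W \<and> (\<forall>i<n. outdeg F i \<le> 1) \<and> acyclic F"
proof
  assume forest: "is_in_forest n W F"
  then have "F \<subseteq> arcs n W \<and> (\<forall>i<n. outdeg F i \<le> 1)"
    unfolding is_in_forest_def by (elim conjE) (intro conjI)
  with acyclic_if_is_in_forest[OF forest] show "F \<subseteq> arcs n W \<and> (\<forall>i<n. outdeg F i \<le> 1) \<and> acyclic F"
    by simp
qed (simp add: is_in_forest_if_acyclic)

lemma in_forestsD:
  assumes "F \<in> in_forests n W"
  shows "F \<subseteq> arcs n W" "single_valued F" "acyclic F" "finite F"
proof -
  have sub: "F \<subseteq> arcs n W" and outdeg: "\<forall>i<n. outdeg F i \<le> 1" and "acyclic F"
    using assms by (simp_all add: in_forests_def is_in_forest_iff_acyclic)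
  then show "F \<subseteq> arcs n W" "acyclic F" "single_valued F" "finite F"
    using single_valued_if_outdeg_le_1[OF sub outdeg] finite_subset[OF sub finite_arcs] by simp_all
qed

lemma finite_in_forests: "finite (in_forests n W)"
  by (rule finite_subset[of _ "Pow (arcs n W)"]) (auto dest: in_forestsD simp: finite_arcs)

lemma card_in_forest_le:
  assumes forest: "F \<in> in_forests n W"
  shows "card F \<le> n - forest_dim n W"
proof -
  note F = in_forestsD[OF forest]
  let ?R = "{r. r < n \<and> outdeg F r = 0}"
  have dom: "Domain F \<subseteq> {0..<n}"
    using F(1) by (auto simp: arcs_def)
  have "?R = {0..<n} - Domain F"
    using F(4) by (auto simp: outdeg_eq_0_iff)
  then have "card (Domain F) + card ?R = n"
    using dom card_Diff_subset[OF finite_subset[OF dom] dom] card_mono[OF _ dom] by simp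
  moreover have "card F = card (Domain F)"
  proof -
    have "inj_on fst F"
      using F(2) unfolding single_valued_def inj_on_def by auto
    then show ?thesis
      by (simp add: Domain_fst card_image)
  qed
  moreover have "forest_dim n W \<le> card ?R"
    unfolding forest_dim_def num_trees_def[symmetric]
    using finite_in_forests forest by (intro Min_le) auto
  ultimately show ?thesis
    by linarith
qed

section \<open>Forest expansion of det and adj of I + tL\<close>

lemma laplacian_carrier: "laplacian n W \<in> carrier_mat n n"
  by (simp add: laplacian_def)

definition row_choices :: "nat \<Rightarrow> real mat \<Rightarrow> nat \<Rightarrow> nat option set" where
  "row_choices n W i = insert None (Some ` {m. (i,m) \<in> arcs n W})"

definition choice_weight :: "real mat \<Rightarrow> real \<Rightarrow> nat \<Rightarrow> nat option \<Rightarrow> real" where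
  "choice_weight W t i c = (case c of None \<Rightarrow> 1 | Some m \<Rightarrow> t * W $$ (i,m))"

lemma finite_row_choices: "finite (row_choices n W i)"
proof -
  have "{m. (i,m) \<in> arcs n W} \<subseteq> {..<n}"
    by (auto simp: arcs_def)
  then show ?thesis
    unfolding row_choices_def by (simp add: finite_subset)
qed

lemma one_plus_laplacian_row_expansion:
  assumes i: "i < n" and k: "k < n"
  shows "(1\<^sub>m n + t \<cdot>\<^sub>m laplacian n W) $$ (i,k) =
    (\<Sum>c\<in>row_choices n W i. choice_weight W t i c * succ_row i c k)"
proof -
  let ?N = "{m. (i,m) \<in> arcs n W}"
  have N: "?N \<subseteq> {..<n}" "finite ?N"
    using finite_subset[of ?N "{..<n}"] by (auto simp: arcs_def)
  have "(\<Sum>c\<in>row_choices n W i. choice_weight W t i c * succ_row i c k)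
      = succ_row i None k + (\<Sum>m\<in>?N. t * W $$ (i,m) * succ_row i (Some m) k)"
    unfolding row_choices_def using N(2)
    by (simp add: sum.reindex choice_weight_def)
  also have "(\<Sum>m\<in>?N. t * W $$ (i,m) * succ_row i (Some m) k)
      = (\<Sum>m<n. t * W $$ (i,m) * succ_row i (Some m) k)"
    using N i by (intro sum.mono_neutral_left) (auto simp: arcs_def)
  also have "\<dots> = (if k = i then t * (\<Sum>m\<in>{0..<n} - {i}. W $$ (i,m)) else - t * W $$ (i,k))"
  proof (cases "k = i")
    case True
    have "(\<Sum>m<n. t * W $$ (i,m) * succ_row i (Some m) k) = (\<Sum>m\<in>{0..<n} - {i}. t * W $$ (i,m))"
      using True i by (intro sum.mono_neutral_cong_right) (auto simp: succ_row_def)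
    with True show ?thesis
      by (simp add: sum_distrib_left)
  next
    case False
    have "(\<Sum>m<n. t * W $$ (i,m) * succ_row i (Some m) k) = (\<Sum>m<n. if m = k then - t * W $$ (i,k) else 0)"
      using False by (intro sum.cong) (auto simp: succ_row_def)
    with False k show ?thesis
      by simp
  qed
  finally show ?thesis
    using i k by (simp add: laplacian_def succ_row_def)
qed

lemma det_one_plus_laplacian_expansion:
  "det (1\<^sub>m n + t \<cdot>\<^sub>m laplacian n W) =
    (\<Sum>f\<in>PiE {0..<n} (row_choices n W). (\<Prod>i=0..<n. choice_weight W t i (f i)) * det (succ_mat n f))"
  unfolding succ_mat_def
proof (rule det_expand_rows)
  show "1\<^sub>m n + t \<cdot>\<^sub>m laplacian n W \<in> carrier_mat n n"
    by (simp add: laplacian_def)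
qed (simp_all add: finite_row_choices one_plus_laplacian_row_expansion)

lemma succ_rel_subset_arcs:
  assumes "f \<in> PiE {0..<n} (row_choices n W)"
  shows "succ_rel n f \<subseteq> arcs n W"
  using assms by (auto simp: succ_rel_def row_choices_def PiE_def Pi_def)

lemma range_succ_rel_choices:
  "f \<in> PiE {0..<n} (row_choices n W) \<Longrightarrow> Range (succ_rel n f) \<subseteq> {..<n}"
  using succ_rel_subset_arcs by (fastforce simp: arcs_def)

lemma prod_choice_weight:
  "(\<Prod>k=0..<n. choice_weight W t k (f k)) = t ^ card (succ_rel n f) * sg_weight W (succ_rel n f)"
proof -
  let ?D = "{k. k < n \<and> f k \<noteq> None}"
  have "(\<Prod>k=0..<n. choice_weight W t k (f k)) = (\<Prod>k\<in>?D. choice_weight W t k (f k))"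
    by (rule prod.mono_neutral_right) (auto simp: choice_weight_def)
  also have "\<dots> = (\<Prod>k\<in>?D. t * W $$ (k, the (f k)))"
    by (rule prod.cong) (auto simp: choice_weight_def)
  also have "\<dots> = t ^ card ?D * (\<Prod>k\<in>?D. W $$ (k, the (f k)))"
    by (simp add: prod.distrib)
  also have "\<dots> = t ^ card (succ_rel n f) * sg_weight W (succ_rel n f)"
  proof -
    have "succ_rel n f = (\<lambda>k. (k, the (f k))) ` ?D"
      unfolding succ_rel_def by force
    moreover have "inj_on (\<lambda>k. (k, the (f k))) ?D"
      by (rule inj_onI) auto
    ultimately show ?thesis
      unfolding sg_weight_def by (simp add: card_image prod.reindex)
  qed
  finally show ?thesis .
qed

lemma inj_on_succ_rel: "inj_on (succ_rel n) (PiE {0..<n} C)"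
proof (rule inj_onI, rule extensionalityI)
  fix f g k
  assume f: "f \<in> PiE {0..<n} C" and g: "g \<in> PiE {0..<n} C" and eq: "succ_rel n f = succ_rel n g"
  show "f \<in> extensional {0..<n}" "g \<in> extensional {0..<n}"
    using f g by (auto simp: PiE_def)
  assume "k \<in> {0..<n}"
  then have "\<forall>m. f k = Some m \<longleftrightarrow> g k = Some m"
    using eq unfolding succ_rel_def set_eq_iff by auto
  then show "f k = g k"
    by (metis not_Some_eq)
qed

lemma bij_betw_succ_rel_in_forests:
  "bij_betw (succ_rel n) {f \<in> PiE {0..<n} (row_choices n W). acyclic (succ_rel n f)} (in_forests n W)"
proof (rule bij_betw_imageI)
  show "inj_on (succ_rel n) {f \<in> PiE {0..<n} (row_choices n W). acyclic (succ_rel n f)}"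
    by (rule inj_on_subset[OF inj_on_succ_rel]) auto
next
  show "succ_rel n ` {f \<in> PiE {0..<n} (row_choices n W). acyclic (succ_rel n f)} = in_forests n W"
  proof (intro equalityI subsetI)
    fix F assume "F \<in> succ_rel n ` {f \<in> PiE {0..<n} (row_choices n W). acyclic (succ_rel n f)}"
    then obtain f where f: "f \<in> PiE {0..<n} (row_choices n W)" "acyclic (succ_rel n f)"
      and F: "F = succ_rel n f" by blast
    have "card (set_option c) \<le> 1" for c :: "nat option"
      by (cases c) auto
    then have "\<forall>i<n. outdeg (succ_rel n f) i \<le> 1"
      by (simp add: outdeg_succ_rel)
    with f show "F \<in> in_forests n W"
      unfolding F in_forests_def by (simp add: is_in_forest_if_acyclic succ_rel_subset_arcs)
  next
    fix F assume "F \<in> in_forests n W"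
    note sub = in_forestsD(1)[OF this] and sv = in_forestsD(2)[OF this]
      and acyc = in_forestsD(3)[OF this]
    define f where "f k = (if k < n then (if k \<in> Domain F then Some (THE m. (k,m) \<in> F) else None) else undefined)" for k
    have the_succ: "(THE m. (k,m) \<in> F) = m" if "(k,m) \<in> F" for k m
      using sv that unfolding single_valued_def by blast
    have F: "F = succ_rel n f"
      using sub the_succ by (auto simp: f_def succ_rel_def arcs_def split: if_splits)
    have "f \<in> PiE {0..<n} (row_choices n W)"
      using sub the_succ by (force simp: f_def row_choices_def PiE_def extensional_def)
    with acyc show "F \<in> succ_rel n ` {f \<in> PiE {0..<n} (row_choices n W). acyclic (succ_rel n f)}"
      unfolding F by blast
  qed
qed

lemma sum_acyclic_choices_eq_forest_sum:
  "(\<Sum>f \<in> {f \<in> PiE {0..<n} (row_choices n W). acyclic (succ_rel n f) \<and> P (succ_rel n f)}.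
      \<Prod>k=0..<n. choice_weight W t k (f k))
   = (\<Sum>F \<in> {F \<in> in_forests n W. P F}. t ^ card F * sg_weight W F)"
proof -
  have "{f \<in> PiE {0..<n} (row_choices n W). acyclic (succ_rel n f) \<and> P (succ_rel n f)}
      = {f \<in> {f \<in> PiE {0..<n} (row_choices n W). acyclic (succ_rel n f)}. P (succ_rel n f)}"
    by auto
  then have "bij_betw (succ_rel n)
      {f \<in> PiE {0..<n} (row_choices n W). acyclic (succ_rel n f) \<and> P (succ_rel n f)}
      {F \<in> in_forests n W. P F}"
    using bij_betw_Collect[OF bij_betw_succ_rel_in_forests] by simp
  from sum.reindex_bij_betw[OF this] show ?thesis
    by (simp add: prod_choice_weight)
qed

lemma det_one_plus_laplacian:
  "det (1\<^sub>m n + t \<cdot>\<^sub>m laplacian n W) = (\<Sum>F\<in>in_forests n W. t ^ card F * sg_weight W F)"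
proof -
  let ?S = "PiE {0..<n} (row_choices n W)" and ?w = "\<lambda>f. \<Prod>k=0..<n. choice_weight W t k (f k)"
  have "det (1\<^sub>m n + t \<cdot>\<^sub>m laplacian n W) = (\<Sum>f\<in>?S. ?w f * det (succ_mat n f))"
    by (rule det_one_plus_laplacian_expansion)
  also have "\<dots> = (\<Sum>f\<in>?S. if acyclic (succ_rel n f) then ?w f else 0)"
    by (intro sum.cong refl) (simp add: det_succ_mat range_succ_rel_choices)
  also have "\<dots> = (\<Sum>f\<in>{f\<in>?S. acyclic (succ_rel n f)}. ?w f)"
    by (simp add: sum.inter_filter finite_PiE finite_row_choices)
  also have "\<dots> = (\<Sum>F\<in>in_forests n W. t ^ card F * sg_weight W F)"
    using sum_acyclic_choices_eq_forest_sum[where P = "\<lambda>_. True"] by simp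
  finally show ?thesis .
qed

lemma prod_choice_weight_override:
  assumes j: "j < n" and fj: "f j = None"
  shows "(\<Prod>k=0..<n. if k = j then x else choice_weight W t k (f k)) = x * (\<Prod>k=0..<n. choice_weight W t k (f k))"
proof -
  have "(\<Prod>k=0..<n. if k = j then x else choice_weight W t k (f k))
      = x * (\<Prod>k\<in>{0..<n} - {j}. if k = j then x else choice_weight W t k (f k))"
    using j by (simp add: prod.remove[of "{0..<n}" j])
  also have "(\<Prod>k\<in>{0..<n} - {j}. if k = j then x else choice_weight W t k (f k))
      = (\<Prod>k\<in>{0..<n} - {j}. choice_weight W t k (f k))"
    by (rule prod.cong) auto
  also have "\<dots> = (\<Prod>k=0..<n. choice_weight W t k (f k))"
    using j fj by (simp add: prod.remove[of "{0..<n}" j] choice_weight_def)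
  finally show ?thesis .
qed

lemma adj_one_plus_laplacian_choices:
  assumes i: "i < n" and j: "j < n"
  shows "adj_mat (1\<^sub>m n + t \<cdot>\<^sub>m laplacian n W) $$ (i,j) =
    (\<Sum>f\<in>PiE {0..<n} ((row_choices n W)(j := {None, Some i})).
       (\<Prod>k=0..<n. if k = j then (if f k = None then 1 else -1) else choice_weight W t k (f k)) *
       det (succ_mat n f))"
proof -
  let ?A = "1\<^sub>m n + t \<cdot>\<^sub>m laplacian n W"
  have "adj_mat ?A $$ (i,j) = det (mat n n (\<lambda>(k,l). if k = j then (if l = i then 1 else 0) else ?A $$ (k,l)))"
    by (rule adj_mat_entry_eq_det_replace_row) (simp_all add: laplacian_def i j)
  \<comment> \<open>row j is now e_i = e_j - (e_j - e_i)\<close>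
  also have "\<dots> = (\<Sum>f\<in>PiE {0..<n} ((row_choices n W)(j := {None, Some i})).
       (\<Prod>k=0..<n. if k = j then (if f k = None then 1 else -1) else choice_weight W t k (f k)) *
       det (succ_mat n f))"
    unfolding succ_mat_def
  proof (rule det_expand_rows[where a = "\<lambda>k c. if k = j then (if c = None then 1 else -1) else choice_weight W t k c"])
    fix k l assume k: "k < n" and l: "l < n"
    show "mat n n (\<lambda>(k,l). if k = j then (if l = i then 1 else 0) else ?A $$ (k,l)) $$ (k,l) =
        (\<Sum>c\<in>((row_choices n W)(j := {None, Some i})) k.
           (if k = j then (if c = None then 1 else -1) else choice_weight W t k c) * succ_row k c l)"
      using k l by (cases "k = j") (auto simp: succ_row_def one_plus_laplacian_row_expansion)
  qed (simp_all add: finite_row_choices)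
  finally show ?thesis .
qed

lemma adj_one_plus_laplacian_expansion:
  assumes i: "i < n" and j: "j < n"
  shows "adj_mat (1\<^sub>m n + t \<cdot>\<^sub>m laplacian n W) $$ (i,j) =
    (\<Sum>f\<in>PiE {0..<n} ((row_choices n W)(j := {None})).
       (\<Prod>k=0..<n. choice_weight W t k (f k)) * (det (succ_mat n f) - det (succ_mat n (f(j := Some i)))))"
  unfolding adj_one_plus_laplacian_choices[OF i j]
proof (subst sum_PiE_fun_upd_pair, simp_all add: j, rule sum.cong[OF refl])
  fix f assume "f \<in> PiE {0..<n} ((row_choices n W)(j := {None}))"
  with j have fj: "f j = None"
    by (auto simp: PiE_def Pi_def)
  have "(\<Prod>k=0..<n. if k = j then (if (f(j := Some i)) k = None then 1 else -1) else choice_weight W t k ((f(j := Some i)) k))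
      = (\<Prod>k=0..<n. if k = j then -1 else choice_weight W t k (f k))"
    by (rule prod.cong) simp_all
  moreover have "(\<Prod>k=0..<n. if k = j then (if f k = None then 1 else -1) else choice_weight W t k (f k))
      = (\<Prod>k=0..<n. if k = j then 1 else choice_weight W t k (f k))"
    using fj by (intro prod.cong) simp_all
  ultimately show "(\<Prod>k=0..<n. if k = j then (if f k = None then 1 else -1) else choice_weight W t k (f k)) * det (succ_mat n f) +
      (\<Prod>k=0..<n. if k = j then (if (f(j := Some i)) k = None then 1 else -1) else choice_weight W t k ((f(j := Some i)) k)) *
        det (succ_mat n (f(j := Some i))) =
      (\<Prod>k=0..<n. choice_weight W t k (f k)) * (det (succ_mat n f) - det (succ_mat n (f(j := Some i))))"
    using prod_choice_weight_override[where f = f, OF j fj] by (simp add: algebra_simps)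
qed

lemma adj_one_plus_laplacian:
  assumes i: "i < n" and j: "j < n"
  shows "adj_mat (1\<^sub>m n + t \<cdot>\<^sub>m laplacian n W) $$ (i,j) =
    (\<Sum>F\<in>{F \<in> in_forests n W. weak_conn F i j \<and> outdeg F j = 0}. t ^ card F * sg_weight W F)"
proof -
  let ?S = "PiE {0..<n} (row_choices n W)" and ?w = "\<lambda>f. \<Prod>k=0..<n. choice_weight W t k (f k)"
  let ?P = "\<lambda>F. j \<notin> Domain F \<and> (i,j) \<in> F\<^sup>*"
  have fin: "finite ?S"
    by (simp add: finite_PiE finite_row_choices)
  have "PiE {0..<n} ((row_choices n W)(j := {None})) = {f \<in> ?S. f j = None}"
    using j by (auto simp: PiE_def Pi_def row_choices_def)
  then have "adj_mat (1\<^sub>m n + t \<cdot>\<^sub>m laplacian n W) $$ (i,j) =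
      (\<Sum>f\<in>?S. if f j = None then ?w f * (det (succ_mat n f) - det (succ_mat n (f(j := Some i)))) else 0)"
    by (simp add: adj_one_plus_laplacian_expansion[OF i j] sum.inter_filter[OF fin])
  also have "\<dots> = (\<Sum>f\<in>?S. if acyclic (succ_rel n f) \<and> ?P (succ_rel n f) then ?w f else 0)"
  proof (rule sum.cong[OF refl])
    fix f assume f: "f \<in> ?S"
    show "(if f j = None then ?w f * (det (succ_mat n f) - det (succ_mat n (f(j := Some i)))) else 0) =
        (if acyclic (succ_rel n f) \<and> ?P (succ_rel n f) then ?w f else 0)"
    proof (cases "f j = None")
      case True
      have "Range (succ_rel n (f(j := Some i))) \<subseteq> {..<n}"
        using range_succ_rel_choices[OF f] i j True by (simp add: succ_rel_fun_upd)
      with True j show ?thesis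
        by (simp add: det_succ_mat range_succ_rel_choices[OF f] succ_rel_fun_upd Domain_succ_rel)
    qed (auto simp: Domain_succ_rel j)
  qed
  also have "\<dots> = (\<Sum>f\<in>{f \<in> ?S. acyclic (succ_rel n f) \<and> ?P (succ_rel n f)}. ?w f)"
    by (simp add: sum.inter_filter[OF fin])
  also have "\<dots> = (\<Sum>F\<in>{F \<in> in_forests n W. ?P F}. t ^ card F * sg_weight W F)"
    by (rule sum_acyclic_choices_eq_forest_sum)
  also have "{F \<in> in_forests n W. ?P F} = {F \<in> in_forests n W. weak_conn F i j \<and> outdeg F j = 0}"
    using weak_conn_sink_iff[OF in_forestsD(2)] in_forestsD(4) by (auto simp: outdeg_eq_0_iff)
  finally show ?thesis .
qed

lemma forest_sum_by_card:
  "(\<Sum>F\<in>{F \<in> in_forests n W. P F}. t ^ card F * sg_weight W F) =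
   (\<Sum>k\<le>n - forest_dim n W. t ^ k * (\<Sum>F\<in>{F \<in> in_forests n W. card F = k \<and> P F}. sg_weight W F))"
proof -
  have "(\<Sum>F\<in>{F \<in> in_forests n W. P F}. t ^ card F * sg_weight W F) =
      (\<Sum>k\<le>n - forest_dim n W. \<Sum>F\<in>{F \<in> {F \<in> in_forests n W. P F}. card F = k}. t ^ card F * sg_weight W F)"
    by (rule sum.group[symmetric]) (auto simp: finite_in_forests card_in_forest_le)
  also have "\<dots> = (\<Sum>k\<le>n - forest_dim n W. t ^ k * (\<Sum>F\<in>{F \<in> in_forests n W. card F = k \<and> P F}. sg_weight W F))"
  proof (intro sum.cong refl)
    fix k
    have "{F \<in> {F \<in> in_forests n W. P F}. card F = k} = {F \<in> in_forests n W. card F = k \<and> P F}"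
      by auto
    then show "(\<Sum>F\<in>{F \<in> {F \<in> in_forests n W. P F}. card F = k}. t ^ card F * sg_weight W F) =
        t ^ k * (\<Sum>F\<in>{F \<in> in_forests n W. card F = k \<and> P F}. sg_weight W F)"
      by (simp add: sum_distrib_left)
  qed
  finally show ?thesis .
qed

lemma det_one_plus_laplacian_poly:
  "det (1\<^sub>m n + t \<cdot>\<^sub>m laplacian n W) = (\<Sum>k\<le>n - forest_dim n W. sigma n W k * t ^ k)"
  using forest_sum_by_card[where P = "\<lambda>_. True" and t = t]
  by (simp add: det_one_plus_laplacian sigma_def mult.commute)

lemma adj_one_plus_laplacian_poly:
  assumes "i < n" "j < n"
  shows "adj_mat (1\<^sub>m n + t \<cdot>\<^sub>m laplacian n W) $$ (i,j) =
    (\<Sum>k\<le>n - forest_dim n W. t ^ k * Qk n W k $$ (i,j))"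
  using forest_sum_by_card[where P = "\<lambda>F. weak_conn F i j \<and> outdeg F j = 0" and t = t] assms
  by (simp add: adj_one_plus_laplacian Qk_def)

section \<open>Coefficients of the adjugate\<close>

lemma sum_mult_one_plus_scaled:
  fixes q :: "nat \<Rightarrow> nat \<Rightarrow> 'a::comm_semiring_1"
  assumes "l < n"
  shows "(\<Sum>m<n. (\<Sum>k\<le>N. t ^ k * q k m) * ((if m = l then 1 else 0) + t * c m))
    = (\<Sum>k\<le>N. t ^ k * q k l) + (\<Sum>k\<le>N. t ^ Suc k * (\<Sum>m<n. q k m * c m))"
proof -
  have "(\<Sum>m<n. (\<Sum>k\<le>N. t ^ k * q k m) * (if m = l then 1 else 0)) = (\<Sum>k\<le>N. t ^ k * q k l)"
    using assms by (simp add: mult.commute[of _ "if _ then _ else _"] sum_delta_mult)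
  moreover have "(\<Sum>m<n. (\<Sum>k\<le>N. t ^ k * q k m) * (t * c m)) = (\<Sum>k\<le>N. t ^ Suc k * (\<Sum>m<n. q k m * c m))"
    unfolding sum_distrib_right by (subst sum.swap) (simp add: sum_distrib_left mult_ac)
  ultimately show ?thesis
    by (simp add: distrib_left sum.distrib)
qed

lemma adj_coeffs_recurrence:
  fixes L :: "real mat" and Q :: "nat \<Rightarrow> real mat" and s :: "nat \<Rightarrow> real"
  assumes L: "L \<in> carrier_mat n n"
    and det_poly: "\<And>t. det (1\<^sub>m n + t \<cdot>\<^sub>m L) = (\<Sum>k\<le>N. s k * t ^ k)"
    and adj_poly: "\<And>t i j. i < n \<Longrightarrow> j < n \<Longrightarrow> adj_mat (1\<^sub>m n + t \<cdot>\<^sub>m L) $$ (i,j) = (\<Sum>k\<le>N. t ^ k * Q k $$ (i,j))"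
    and i: "i < n" and l: "l < n" and k: "k \<le> N"
  shows "Q k $$ (i,l) + (if k = 0 then 0 else (\<Sum>m<n. Q (k - 1) $$ (i,m) * L $$ (m,l)))
    = s k * (if i = l then 1 else 0)"
proof -
  define QL where "QL k = (\<Sum>m<n. Q k $$ (i,m) * L $$ (m,l))" for k
  define c where "c k = (if k \<le> N then Q k $$ (i,l) else 0) + (if k = 0 then 0 else QL (k - 1))" for k
  define d where "d k = (if k \<le> N then s k else 0) * (if i = l then 1 else 0)" for k
  \<comment> \<open>both sides are the (i,l) entry of adj A * A = det A \<cdot> 1 for A = 1 + t L\<close>
  have "(\<Sum>k\<le>Suc N. c k * t ^ k) = (\<Sum>k\<le>Suc N. d k * t ^ k)" for t
  proof -
    let ?A = "1\<^sub>m n + t \<cdot>\<^sub>m L"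
    have A: "?A \<in> carrier_mat n n"
      using L by simp
    have "(\<Sum>k\<le>Suc N. (if k \<le> N then Q k $$ (i,l) else 0) * t ^ k) = (\<Sum>k\<le>N. t ^ k * Q k $$ (i,l))"
      by (simp add: mult.commute cong: sum.cong_simp)
    moreover have "(\<Sum>k\<le>Suc N. (if k = 0 then 0 else QL (k - 1)) * t ^ k) = (\<Sum>k\<le>N. t ^ Suc k * QL k)"
      by (simp only: sum.atMost_Suc_shift) (simp add: mult.commute)
    ultimately have "(\<Sum>k\<le>Suc N. c k * t ^ k) = (\<Sum>k\<le>N. t ^ k * Q k $$ (i,l)) + (\<Sum>k\<le>N. t ^ Suc k * QL k)"
      unfolding c_def distrib_right sum.distrib by simp
    also have "\<dots> = (\<Sum>m<n. (\<Sum>k\<le>N. t ^ k * Q k $$ (i,m)) * ((if m = l then 1 else 0) + t * L $$ (m,l)))"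
      unfolding QL_def by (rule sum_mult_one_plus_scaled[OF l, symmetric])
    also have "\<dots> = (\<Sum>m<n. adj_mat ?A $$ (i,m) * ?A $$ (m,l))"
      using L i l by (intro sum.cong refl) (simp add: adj_poly)
    also have "\<dots> = (adj_mat ?A * ?A) $$ (i,l)"
      by (rule index_mult_mat_square[OF adj_mat(1)[OF A] A i l, symmetric])
    also have "\<dots> = det ?A * (if i = l then 1 else 0)"
      using adj_mat(3)[OF A] i l by simp
    also have "\<dots> = (\<Sum>k\<le>Suc N. d k * t ^ k)"
      unfolding det_poly d_def by (simp add: sum_distrib_right mult_ac cong: sum.cong_simp)
    finally show ?thesis .
  qed
  then have "c k = d k"
    using k polyfun_eq_coeffs[of c "Suc N" d] by auto
  with k show ?thesis
    unfolding c_def d_def QL_def by simp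
qed

lemma adj_coeffs_eq_sum_pow:
  fixes L :: "real mat" and Q :: "nat \<Rightarrow> real mat" and s :: "nat \<Rightarrow> real"
  assumes L: "L \<in> carrier_mat n n"
    and det_poly: "\<And>t. det (1\<^sub>m n + t \<cdot>\<^sub>m L) = (\<Sum>k\<le>N. s k * t ^ k)"
    and adj_poly: "\<And>t i j. i < n \<Longrightarrow> j < n \<Longrightarrow> adj_mat (1\<^sub>m n + t \<cdot>\<^sub>m L) $$ (i,j) = (\<Sum>k\<le>N. t ^ k * Q k $$ (i,j))"
    and k: "k \<le> N" and i: "i < n" and l: "l < n"
  shows "Q k $$ (i,l) = (\<Sum>j\<le>k. s (k - j) * ((- L) ^\<^sub>m j) $$ (i,l))"
  using k i l
proof (induction k arbitrary: l)
  case 0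
  then have "Q 0 $$ (i,l) = s 0 * (if i = l then 1 else 0)"
    using adj_coeffs_recurrence[OF L det_poly adj_poly i, of l 0] by simp
  with 0 L show ?case
    by simp
next
  case (Suc k)
  let ?P = "\<lambda>j. (- L) ^\<^sub>m j"
  have P_Suc: "?P (Suc j) $$ (i,l) = - (\<Sum>m<n. ?P j $$ (i,m) * L $$ (m,l))" for j
  proof -
    have "?P (Suc j) $$ (i,l) = (?P j * (- L)) $$ (i,l)"
      by (simp only: pow_mat.simps(2))
    also have "\<dots> = (\<Sum>m<n. ?P j $$ (i,m) * (- L) $$ (m,l))"
      using L i Suc.prems(3) by (intro index_mult_mat_square) simp_all
    also have "\<dots> = - (\<Sum>m<n. ?P j $$ (i,m) * L $$ (m,l))"
      using L Suc.prems(3) by (simp add: sum_negf[symmetric] cong: sum.cong_simp)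
    finally show ?thesis .
  qed
  have "Q (Suc k) $$ (i,l) = s (Suc k) * (if i = l then 1 else 0) - (\<Sum>m<n. Q k $$ (i,m) * L $$ (m,l))"
    using adj_coeffs_recurrence[OF L det_poly adj_poly i Suc.prems(3) Suc.prems(1)] by simp
  also have "(\<Sum>m<n. Q k $$ (i,m) * L $$ (m,l)) = (\<Sum>j\<le>k. s (k - j) * (\<Sum>m<n. ?P j $$ (i,m) * L $$ (m,l)))"
    using Suc by (simp add: sum_distrib_left sum_distrib_right mult_ac sum.swap[of _ "{..<n}"])
  also have "\<dots> = - (\<Sum>j\<le>k. s (k - j) * ?P (Suc j) $$ (i,l))"
    by (simp only: P_Suc) (simp add: sum_negf)
  also have "s (Suc k) * (if i = l then 1 else 0) - - (\<Sum>j\<le>k. s (k - j) * ?P (Suc j) $$ (i,l))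
      = (\<Sum>j\<le>Suc k. s (Suc k - j) * ?P j $$ (i,l))"
    unfolding sum.atMost_Suc_shift using L i Suc.prems(3) by simp
  finally show ?case .
qed

lemma Qk_eq_sum_pow:
  assumes "k \<le> n - forest_dim n W" "i < n" "l < n"
  shows "Qk n W k $$ (i,l) = (\<Sum>j\<le>k. sigma n W (k - j) * ((- laplacian n W) ^\<^sub>m j) $$ (i,l))"
  by (rule adj_coeffs_eq_sum_pow[OF laplacian_carrier det_one_plus_laplacian_poly
        adj_one_plus_laplacian_poly assms])

lemma Qtau_entry:
  "i < n \<Longrightarrow> l < n \<Longrightarrow> Qtau n W \<tau> $$ (i,l) = (\<Sum>k\<le>n - forest_dim n W. \<tau> ^ k * Qk n W k $$ (i,l))"
  by (simp add: Qtau_def mat_sum_def Qk_def atLeast0AtMost)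

lemma Qtau_eq_adj: "Qtau n W \<tau> = adj_mat (1\<^sub>m n + \<tau> \<cdot>\<^sub>m laplacian n W)"
proof (rule eq_matI)
  fix i l assume "i < dim_row (adj_mat (1\<^sub>m n + \<tau> \<cdot>\<^sub>m laplacian n W))"
    and "l < dim_col (adj_mat (1\<^sub>m n + \<tau> \<cdot>\<^sub>m laplacian n W))"
  then have "i < n" "l < n"
    by (simp_all add: adj_mat_def laplacian_def)
  then show "Qtau n W \<tau> $$ (i,l) = adj_mat (1\<^sub>m n + \<tau> \<cdot>\<^sub>m laplacian n W) $$ (i,l)"
    by (simp add: Qtau_entry adj_one_plus_laplacian_poly)
qed (simp_all add: adj_mat_def Qtau_def mat_sum_def laplacian_def)

lemma Qtau_eq_sum_pow:
  fixes n :: nat and W :: "real mat"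
  defines "N \<equiv> n - forest_dim n W"
  shows "Qtau n W \<tau> =
    mat_sum n (\<lambda>k. s_tau n W (N - k) \<tau> \<cdot>\<^sub>m ((- (\<tau> \<cdot>\<^sub>m laplacian n W)) ^\<^sub>m k)) {0..N}"
proof (rule eq_matI)
  fix i l assume "i < dim_row (mat_sum n (\<lambda>k. s_tau n W (N - k) \<tau> \<cdot>\<^sub>m ((- (\<tau> \<cdot>\<^sub>m laplacian n W)) ^\<^sub>m k)) {0..N})"
    and "l < dim_col (mat_sum n (\<lambda>k. s_tau n W (N - k) \<tau> \<cdot>\<^sub>m ((- (\<tau> \<cdot>\<^sub>m laplacian n W)) ^\<^sub>m k)) {0..N})"
  then have i: "i < n" and l: "l < n"
    by (simp_all add: mat_sum_def)
  let ?L = "laplacian n W"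
  have L: "?L \<in> carrier_mat n n"
    by (rule laplacian_carrier)
  have pow: "(- (\<tau> \<cdot>\<^sub>m ?L)) ^\<^sub>m k = \<tau> ^ k \<cdot>\<^sub>m (- ?L) ^\<^sub>m k" for k
  proof -
    have "- (\<tau> \<cdot>\<^sub>m ?L) = \<tau> \<cdot>\<^sub>m (- ?L)"
      using L by (intro eq_matI) auto
    then show ?thesis
      using pow_mat_smult[of "- ?L" n] L by simp
  qed
  have "Qtau n W \<tau> $$ (i,l) = (\<Sum>k\<le>N. \<tau> ^ k * (\<Sum>j\<le>k. sigma n W (k - j) * ((- ?L) ^\<^sub>m j) $$ (i,l)))"
    unfolding Qtau_entry[OF i l] N_def using i l by (intro sum.cong refl) (simp add: Qk_eq_sum_pow)
  also have "\<dots> = (\<Sum>k\<le>N. (\<Sum>m\<le>N - k. sigma n W m * \<tau> ^ m) * (\<tau> ^ k * ((- ?L) ^\<^sub>m k) $$ (i,l)))"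
    by (rule sum_convolution_reindex)
  also have "\<dots> = (\<Sum>k\<le>N. s_tau n W (N - k) \<tau> * (\<tau> ^ k * ((- ?L) ^\<^sub>m k) $$ (i,l)))"
    by (simp add: s_tau_def atLeast0AtMost)
  also have "\<dots> = mat_sum n (\<lambda>k. s_tau n W (N - k) \<tau> \<cdot>\<^sub>m ((- (\<tau> \<cdot>\<^sub>m ?L)) ^\<^sub>m k)) {0..N} $$ (i,l)"
    using i l L by (simp add: mat_sum_def pow atLeast0AtMost)
  finally show "Qtau n W \<tau> $$ (i,l) = mat_sum n (\<lambda>k. s_tau n W (N - k) \<tau> \<cdot>\<^sub>m ((- (\<tau> \<cdot>\<^sub>m ?L)) ^\<^sub>m k)) {0..N} $$ (i,l)" .
qed (simp_all add: Qtau_def mat_sum_def)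

lemma Qtot_eq_Qtau_1: "Qtot n W = Qtau n W 1"
  by (rule eq_matI) (auto simp: Qtot_def Qtau_def mat_sum_def Qk_def)

lemma s_sum_eq_s_tau_1: "s_sum n W k = s_tau n W k 1"
  by (simp add: s_sum_def s_tau_def)

theorem proposition7:
  fixes n :: nat and W :: "real mat"
  assumes "n > 1"
    and "W \<in> carrier_mat n n"
    and "\<forall>i<n. W $$ (i,i) = 0"
    and "\<forall>i<n. \<forall>j<n. W $$ (i,j) \<ge> 0"
  defines "L \<equiv> laplacian n W" and "d \<equiv> forest_dim n W"
  shows "Qtot n W = mat_sum n (\<lambda>k. s_sum n W (n - d - k) \<cdot>\<^sub>m ((- L) ^\<^sub>m k)) {0..n - d}
       \<and> Qtot n W = adj_mat (1\<^sub>m n + L)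
       \<and> (\<forall>\<tau>::real.
            Qtau n W \<tau> = mat_sum n (\<lambda>k. s_tau n W (n - d - k) \<tau> \<cdot>\<^sub>m ((- (\<tau> \<cdot>\<^sub>m L)) ^\<^sub>m k)) {0..n - d}
          \<and> Qtau n W \<tau> = adj_mat (1\<^sub>m n + \<tau> \<cdot>\<^sub>m L))"
proof -
  have Qtau: "Qtau n W \<tau> = mat_sum n (\<lambda>k. s_tau n W (n - d - k) \<tau> \<cdot>\<^sub>m ((- (\<tau> \<cdot>\<^sub>m L)) ^\<^sub>m k)) {0..n - d}
      \<and> Qtau n W \<tau> = adj_mat (1\<^sub>m n + \<tau> \<cdot>\<^sub>m L)" for \<tau>
    unfolding L_def d_def using Qtau_eq_sum_pow Qtau_eq_adj by blast
  have one: "1 \<cdot>\<^sub>m L = L"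
    unfolding L_def using laplacian_carrier by (intro eq_matI) auto
  show ?thesis
    unfolding Qtot_eq_Qtau_1 s_sum_eq_s_tau_1 using Qtau Qtau[of 1, unfolded one] by blast
qed

end
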